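(* Let $\tau\in\mathcal{L}$. Then $C(\tau)$ is closed in the Euclidean space $\mathbb{R}$, and moreover $C(\tau)$ is closed and meager in the space $(\mathbb{R},\tau)$.
   Context: $\eta$ denotes the Euclidean topology on $\mathbb{R}$. $\mathcal{L}$ denotes the family of all Hausdorff topologies $\tau$ on $\mathbb{R}$ with $\tau\subset\eta$. For $\tau\in\mathcal{L}$ and $a\in\mathbb{R}$ let $\mathcal{N}_\tau(a)$ be the neighborhood filter of $a$ in $(\mathbb{R},\tau)$; $C(\tau)$ is the set of all $a\in\mathbb{R}$ with $\mathcal{N}_\tau(a)\neq\mathcal{N}_\eta(a)$. *)

theory Defs
  imports "HOL-Analysis.Analysis"
begin

definition nowhere_dense_in :: "'a topology \<Rightarrow> 'a set \<Rightarrow> bool" where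
  "nowhere_dense_in X S \<longleftrightarrow> S \<subseteq> topspace X \<and> X interior_of (X closure_of S) = {}"

definition meager_in :: "'a topology \<Rightarrow> 'a set \<Rightarrow> bool" where
  "meager_in X S \<longleftrightarrow> (\<exists>F. countable F \<and> (\<forall>T\<in>F. nowhere_dense_in X T) \<and> S = \<Union>F)"

text \<open>The family L: Hausdorff topologies on the reals coarser than the Euclidean one.\<close>
definition coarser_Hausdorff :: "real topology \<Rightarrow> bool" where
  "coarser_Hausdorff \<tau> \<longleftrightarrow> topspace \<tau> = UNIV \<and> (\<forall>S. openin \<tau> S \<longrightarrow> open S) \<and> Hausdorff_space \<tau>"

definition C_set :: "real topology \<Rightarrow> real set" where
  "C_set \<tau> = {a. nhdsin \<tau> a \<noteq> nhdsin euclidean a}"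

end

theory Submission
  imports Defs
begin

text \<open>A point \<open>a\<close> has the Euclidean neighbourhood filter in \<open>\<tau>\<close> exactly when it has a bounded
  \<open>\<tau>\<close>-open neighbourhood \<open>U \<subseteq> ball a R\<close>: given \<open>\<epsilon> > 0\<close>, the compact set \<open>cball a R - ball a \<epsilon>\<close>
  is \<open>\<tau>\<close>-compact because \<open>\<tau>\<close> is coarser, so the Hausdorff property separates it from \<open>a\<close> by a
  \<open>\<tau>\<close>-open \<open>V\<close>, and then \<open>U \<inter> V \<subseteq> ball a \<epsilon>\<close>. Hence the complement of \<open>C(\<tau>)\<close> is \<open>\<tau>\<close>-open.
  The part of \<open>C(\<tau>)\<close> in a closed ball is compact, hence \<open>\<tau>\<close>-closed, and has empty \<open>\<tau>\<close>-interior,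
  since a point of that interior would have a bounded \<open>\<tau>\<close>-open neighbourhood; countably many
  balls cover the space.\<close>

lemma nhdsin_euclidean: "nhdsin euclidean a = nhds a"
  by (simp add: nhdsin_def nhds_def)

lemma nowhere_dense_in_if_closedin:
  assumes "closedin X S" "X interior_of S = {}"
  shows "nowhere_dense_in X S"
  using assms by (simp add: nowhere_dense_in_def closedin_subset closure_of_closedin)

locale coarser_Hausdorff_topology =
  fixes \<tau> :: "'a::heine_borel topology"
  assumes topspace_eq [simp]: "topspace \<tau> = UNIV"
    and open_if_openin: "openin \<tau> S \<Longrightarrow> open S"
    and Hausdorff: "Hausdorff_space \<tau>"
begin

lemma continuous_map_euclidean_id: "continuous_map euclidean \<tau> id"
  by (auto simp: continuous_map_def open_if_openin)

lemma compactin_if_compact: "compact K \<Longrightarrow> compactin \<tau> K"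
  using image_compactin[OF _ continuous_map_euclidean_id] by fastforce

lemma closedin_if_compact: "compact K \<Longrightarrow> closedin \<tau> K"
  by (simp add: compactin_if_compact compactin_imp_closedin Hausdorff)

lemma nhds_le_nhdsin: "nhds a \<le> nhdsin \<tau> a"
  by (rule filter_leI) (auto simp: eventually_nhdsin eventually_nhds dest: open_if_openin)

lemma nhdsin_le_nhds_if_bounded_nbhd:
  assumes U: "openin \<tau> U" "a \<in> U" "bounded U"
  shows "nhdsin \<tau> a \<le> nhds a"
proof (rule filter_leI)
  fix P assume "eventually P (nhds a)"
  then obtain \<epsilon> where "\<epsilon> > 0" and P: "\<And>x. dist x a < \<epsilon> \<Longrightarrow> P x"
    unfolding eventually_nhds_metric by blast
  obtain R where R: "U \<subseteq> ball a R"
    using bounded_subset_ballD[OF U(3)] by blast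
  define K where "K = cball a R - ball a \<epsilon>"
  have "compactin \<tau> K"
    unfolding K_def by (intro compactin_if_compact compact_diff) auto
  moreover have "disjnt {a} K"
    using \<open>\<epsilon> > 0\<close> by (simp add: K_def)
  ultimately obtain V W where VW: "openin \<tau> V" "openin \<tau> W" "a \<in> V" "K \<subseteq> W" "disjnt V W"
    using Hausdorff_space_compact_separation[OF Hausdorff, of "{a}" K] by auto
  have "\<forall>x \<in> U \<inter> V. P x"
  proof
    fix x assume x: "x \<in> U \<inter> V"
    with VW have "x \<notin> K"
      by (auto simp: disjnt_def)
    with x R have "x \<in> ball a \<epsilon>"
      by (auto simp: K_def)
    then show "P x"
      by (intro P) (simp add: dist_commute)
  qed
  with U VW show "eventually P (nhdsin \<tau> a)"
    unfolding eventually_nhdsin by blast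
qed

lemma nhdsin_eq_nhds_iff_bounded_nbhd:
  "nhdsin \<tau> a = nhds a \<longleftrightarrow> (\<exists>U. openin \<tau> U \<and> a \<in> U \<and> bounded U)"
proof
  assume "nhdsin \<tau> a = nhds a"
  then have "eventually (\<lambda>x. x \<in> ball a 1) (nhdsin \<tau> a)"
    by (metis centre_in_ball eventually_nhds_in_open open_ball zero_less_one)
  then obtain U where "openin \<tau> U" "a \<in> U" "\<forall>x\<in>U. x \<in> ball a 1"
    unfolding eventually_nhdsin by auto
  then show "\<exists>U. openin \<tau> U \<and> a \<in> U \<and> bounded U"
    by (meson bounded_subset_ballI subsetI)
next
  assume "\<exists>U. openin \<tau> U \<and> a \<in> U \<and> bounded U"
  then show "nhdsin \<tau> a = nhds a"
    using nhdsin_le_nhds_if_bounded_nbhd nhds_le_nhdsin by (blast intro: antisym)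
qed

lemma openin_euclidean_points: "openin \<tau> {a. nhdsin \<tau> a = nhds a}"
  unfolding nhdsin_eq_nhds_iff_bounded_nbhd by (subst openin_subopen) blast

lemma closedin_non_euclidean_points: "closedin \<tau> {a. nhdsin \<tau> a \<noteq> nhds a}"
  using openin_euclidean_points by (simp add: closedin_def set_diff_eq)

lemma closed_non_euclidean_points: "closed {a. nhdsin \<tau> a \<noteq> nhds a}"
  using open_if_openin[OF openin_euclidean_points] by (simp add: closed_def Collect_neg_eq)

lemma nowhere_dense_in_bounded_non_euclidean_points:
  assumes "bounded B" "closed B"
  shows "nowhere_dense_in \<tau> ({a. nhdsin \<tau> a \<noteq> nhds a} \<inter> B)"
    (is "nowhere_dense_in \<tau> ?S")
proof (rule nowhere_dense_in_if_closedin)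
  have "compact ?S"
    using assms closed_non_euclidean_points
    by (simp add: compact_eq_bounded_closed bounded_Int closed_Int)
  then show "closedin \<tau> ?S"
    by (rule closedin_if_compact)
  have "bounded (\<tau> interior_of ?S)"
    by (meson assms(1) bounded_subset inf_le2 interior_of_subset order_trans)
  then have "nhdsin \<tau> x = nhds x" if "x \<in> \<tau> interior_of ?S" for x
    using that openin_interior_of by (intro nhdsin_eq_nhds_iff_bounded_nbhd[THEN iffD2]) blast
  then show "\<tau> interior_of ?S = {}"
    using interior_of_subset[of \<tau> ?S] by blast
qed

lemma meager_in_non_euclidean_points: "meager_in \<tau> {a. nhdsin \<tau> a \<noteq> nhds a}"
proof -
  fix c :: 'a
  let ?F = "range (\<lambda>n::nat. {a. nhdsin \<tau> a \<noteq> nhds a} \<inter> cball c (real n))"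
  have "\<exists>n::nat. x \<in> cball c (real n)" for x
    by (metis mem_cball real_arch_simple)
  then have "{a. nhdsin \<tau> a \<noteq> nhds a} = \<Union>?F"
    by blast
  then show ?thesis
    unfolding meager_in_def
    using nowhere_dense_in_bounded_non_euclidean_points[OF bounded_cball closed_cball]
    by (intro exI[of _ ?F]) auto
qed

end

lemma coarser_Hausdorff_topology_if_coarser_Hausdorff:
  "coarser_Hausdorff \<tau> \<Longrightarrow> coarser_Hausdorff_topology \<tau>"
  by (simp add: coarser_Hausdorff_def coarser_Hausdorff_topology_def)

theorem proposition3:
  fixes \<tau> :: "real topology"
  assumes "coarser_Hausdorff \<tau>"
  shows "closed (C_set \<tau>) \<and> closedin \<tau> (C_set \<tau>) \<and> meager_in \<tau> (C_set \<tau>)"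
proof -
  interpret coarser_Hausdorff_topology \<tau>
    using assms by (rule coarser_Hausdorff_topology_if_coarser_Hausdorff)
  have "C_set \<tau> = {a. nhdsin \<tau> a \<noteq> nhds a}"
    by (simp add: C_set_def nhdsin_euclidean)
  then show ?thesis
    using closed_non_euclidean_points closedin_non_euclidean_points meager_in_non_euclidean_points
    by simp
qed

end
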